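(* Let $T$ be a tree of order $n$, and let $d_i$ denote the number of dominating sets of $T$ of size $i$. Then $$d_{\left\lceil\frac{n+2\Gamma(T)-2}{3}\right\rceil}\ge\cdots\ge d_{n-1}\ge d_n.$$
   Context: A dominating set of a graph $G=(V,E)$ is a set $S\subseteq V$ such that every vertex is in $S$ or adjacent to a vertex of $S$; it is minimal if no proper subset is dominating. $\Gamma(T)$ is the maximum size of a minimal dominating set of $T$. *)

theory Defs
  imports Complex_Main
begin

definition simple_graph :: "'a set \<Rightarrow> ('a \<Rightarrow> 'a \<Rightarrow> bool) \<Rightarrow> bool" where
  "simple_graph V adj \<longleftrightarrow> finite V \<and>
     (\<forall>u v. adj u v \<longrightarrow> u \<in> V \<and> v \<in> V) \<and>
     (\<forall>u v. adj u v \<longrightarrow> adj v u) \<and> (\<forall>v. \<not> adj v v)"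

definition connected_graph :: "'a set \<Rightarrow> ('a \<Rightarrow> 'a \<Rightarrow> bool) \<Rightarrow> bool" where
  "connected_graph V adj \<longleftrightarrow> (\<forall>u\<in>V. \<forall>v\<in>V. adj\<^sup>*\<^sup>* u v)"

definition is_cycle :: "'a set \<Rightarrow> ('a \<Rightarrow> 'a \<Rightarrow> bool) \<Rightarrow> 'a list \<Rightarrow> bool" where
  "is_cycle V adj xs \<longleftrightarrow> length xs \<ge> 3 \<and> distinct xs \<and> set xs \<subseteq> V \<and>
     (\<forall>i. Suc i < length xs \<longrightarrow> adj (xs ! i) (xs ! Suc i)) \<and>
     adj (last xs) (hd xs)"

definition is_tree :: "'a set \<Rightarrow> ('a \<Rightarrow> 'a \<Rightarrow> bool) \<Rightarrow> bool" where
  "is_tree V adj \<longleftrightarrow> simple_graph V adj \<and> V \<noteq> {} \<and> connected_graph V adj \<and>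
     (\<nexists>xs. is_cycle V adj xs)"

definition dominating :: "'a set \<Rightarrow> ('a \<Rightarrow> 'a \<Rightarrow> bool) \<Rightarrow> 'a set \<Rightarrow> bool" where
  "dominating V adj S \<longleftrightarrow> S \<subseteq> V \<and> (\<forall>v\<in>V. v \<in> S \<or> (\<exists>u\<in>S. adj v u))"

definition minimal_dominating :: "'a set \<Rightarrow> ('a \<Rightarrow> 'a \<Rightarrow> bool) \<Rightarrow> 'a set \<Rightarrow> bool" where
  "minimal_dominating V adj S \<longleftrightarrow> dominating V adj S \<and>
     (\<forall>S'. S' \<subset> S \<longrightarrow> \<not> dominating V adj S')"

definition upper_domination :: "'a set \<Rightarrow> ('a \<Rightarrow> 'a \<Rightarrow> bool) \<Rightarrow> nat" where
  "upper_domination V adj = Max {card S | S. minimal_dominating V adj S}"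

definition dom_count :: "'a set \<Rightarrow> ('a \<Rightarrow> 'a \<Rightarrow> bool) \<Rightarrow> nat \<Rightarrow> nat" where
  "dom_count V adj i = card {S. dominating V adj S \<and> card S = i}"

end

theory Submission
  imports Defs
begin

text \<open>Call x \<in> S redundant if S - {x} still dominates. Deleting a redundant vertex maps the
  pairs (S, x) with |S| = i + 1 injectively to the pairs (T, y) with |T| = i and y \<notin> T, of
  which there are d(i) (n - i); so d(i + 1) \<le> d(i) once every dominating set of size i + 1 has
  at least n - i redundant vertices.

  In a forest every dominating set S with redundant part R satisfies 2 |S - R| + |R| \<le> 2 \<Gamma>.
  Let I be the vertices of S without neighbours in S. Outside the closed neighbourhood of I lie
  R, the other irredundant vertices of S and their distinct private neighbours; since induced
  subforests have independent sets of half their size, I plus such a set is an independent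
  set of size at least |I| + |S - R - I| + |R| / 2, and independent sets extend to minimal
  dominating sets. Hence |R| \<ge> 2 (i + 1) - 2 \<Gamma> \<ge> n - i when 3 i + 2 \<ge> n + 2 \<Gamma>.\<close>

lemma simple_graph_finite: "simple_graph V adj \<Longrightarrow> finite V"
  by (simp add: simple_graph_def)

lemma simple_graph_sym: "simple_graph V adj \<Longrightarrow> adj u v \<Longrightarrow> adj v u"
  by (simp add: simple_graph_def)

lemma simple_graph_irrefl: "simple_graph V adj \<Longrightarrow> \<not> adj v v"
  by (simp add: simple_graph_def)

definition forest :: "'a set \<Rightarrow> ('a \<Rightarrow> 'a \<Rightarrow> bool) \<Rightarrow> bool" where
  "forest V adj \<longleftrightarrow> simple_graph V adj \<and> (\<nexists>xs. is_cycle V adj xs)"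

lemma is_tree_imp_forest: "is_tree V adj \<Longrightarrow> forest V adj"
  by (simp add: is_tree_def forest_def)

definition independent_set :: "('a \<Rightarrow> 'a \<Rightarrow> bool) \<Rightarrow> 'a set \<Rightarrow> bool" where
  "independent_set adj J \<longleftrightarrow> (\<forall>u\<in>J. \<forall>v\<in>J. \<not> adj u v)"

definition is_path :: "'a set \<Rightarrow> ('a \<Rightarrow> 'a \<Rightarrow> bool) \<Rightarrow> 'a list \<Rightarrow> bool" where
  "is_path W adj xs \<longleftrightarrow> xs \<noteq> [] \<and> distinct xs \<and> set xs \<subseteq> W \<and>
     (\<forall>i. Suc i < length xs \<longrightarrow> adj (xs ! i) (xs ! Suc i))"

lemma is_path_mono: "is_path W adj xs \<Longrightarrow> W \<subseteq> V \<Longrightarrow> is_path V adj xs"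
  by (auto simp: is_path_def)

lemma is_path_length_le:
  assumes "is_path W adj xs" "finite W"
  shows "length xs \<le> card W"
  using assms by (metis is_path_def card_mono distinct_card)

lemma is_path_Cons:
  assumes "simple_graph V adj" "is_path W adj xs" "y \<in> W" "y \<notin> set xs" "adj (hd xs) y"
  shows "is_path W adj (y # xs)"
  unfolding is_path_def
proof (intro conjI allI impI)
  fix i assume i: "Suc i < length (y # xs)"
  show "adj ((y # xs) ! i) ((y # xs) ! Suc i)"
  proof (cases i)
    case 0
    then show ?thesis
      using assms simple_graph_sym[OF assms(1)] by (simp add: is_path_def hd_conv_nth)
  next
    case (Suc j)
    then show ?thesis using assms(2) i by (simp add: is_path_def)
  qed
qed (use assms in \<open>auto simp: is_path_def\<close>)

lemma path_chord_cycle: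
  assumes sg: "simple_graph V adj" and xs: "is_path V adj xs"
    and j: "2 \<le> j" "j < length xs" and chord: "adj (hd xs) (xs ! j)"
  shows "is_cycle V adj (take (Suc j) xs)"
  unfolding is_cycle_def
proof (intro conjI allI impI)
  have "last (take (Suc j) xs) = xs ! j"
    using j by (subst last_conv_nth) (auto simp: min_def intro: arg_cong[where f="nth xs"])
  moreover have "hd (take (Suc j) xs) = hd xs"
    using j by simp
  ultimately show "adj (last (take (Suc j) xs)) (hd (take (Suc j) xs))"
    using simple_graph_sym[OF sg chord] by simp
qed (use xs j in \<open>auto simp: is_path_def dest: in_set_takeD\<close>)

text \<open>The head of a longest path in W has no W-neighbour off the path, and a neighbour
  further along the path than the second vertex would close a cycle.\<close>

lemma forest_has_leaf:
  assumes forest: "forest V adj" and W: "W \<subseteq> V" "W \<noteq> {}"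
  obtains x where "x \<in> W" "card {y\<in>W. adj x y} \<le> 1"
proof -
  have sg: "simple_graph V adj" and acyclic: "\<nexists>xs. is_cycle V adj xs"
    using forest by (auto simp: forest_def)
  have finW: "finite W" using W sg simple_graph_finite finite_subset by blast
  obtain w where "w \<in> W" using W by auto
  then have "is_path W adj [w]" by (simp add: is_path_def)
  moreover have "\<forall>ys. is_path W adj ys \<longrightarrow> length ys < card W + 1"
    using is_path_length_le finW by fastforce
  ultimately obtain xs where xs: "is_path W adj xs"
    and longest: "\<forall>ys. is_path W adj ys \<longrightarrow> length ys \<le> length xs"
    using ex_has_greatest_nat[of "is_path W adj" "[w]" length "card W + 1"] by blast
  have ne: "xs \<noteq> []" using xs by (simp add: is_path_def)
  have "y = xs ! 1" if y: "y \<in> W" "adj (hd xs) y" for y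
  proof -
    have "y \<in> set xs"
    proof (rule ccontr)
      assume "y \<notin> set xs"
      then have "is_path W adj (y # xs)" using is_path_Cons[OF sg xs y(1) _ y(2)] by blast
      then show False using longest by fastforce
    qed
    then obtain a where a: "a < length xs" "xs ! a = y" by (auto simp: in_set_conv_nth)
    have "a \<noteq> 0" by (metis a(2) y(2) ne hd_conv_nth simple_graph_irrefl[OF sg])
    moreover have "\<not> 2 \<le> a"
      using path_chord_cycle[OF sg is_path_mono[OF xs W(1)] _ a(1)] a(2) y(2) acyclic by blast
    ultimately have "a = 1" by linarith
    then show ?thesis using a(2) by simp
  qed
  then have "card {y\<in>W. adj (hd xs) y} \<le> card {xs ! 1}"
    by (intro card_mono) auto
  moreover have "hd xs \<in> W" using xs ne by (auto simp: is_path_def)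
  ultimately show ?thesis using that by simp
qed

lemma forest_independent_half:
  assumes forest: "forest V adj" and W: "W \<subseteq> V"
  shows "\<exists>J\<subseteq>W. independent_set adj J \<and> card W \<le> 2 * card J"
  using W
proof (induction "card W" arbitrary: W rule: less_induct)
  case less
  have sg: "simple_graph V adj" using forest by (simp add: forest_def)
  have finW: "finite W" using less.prems sg simple_graph_finite finite_subset by blast
  show ?case
  proof (cases "W = {}")
    case True
    then show ?thesis by (auto simp: independent_set_def)
  next
    case False
    then obtain x where x: "x \<in> W" and leaf: "card {y\<in>W. adj x y} \<le> 1"
      using forest_has_leaf[OF forest less.prems] by blast
    define D where "D = insert x {y\<in>W. adj x y}"
    have DW: "D \<subseteq> W" "x \<in> D" using x by (auto simp: D_def)
    have finD: "finite D" using finite_subset[OF DW(1) finW] .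
    have "card D \<le> 2" using leaf finW by (simp add: D_def card_insert_if)
    moreover have "card W = card (W - D) + card D"
      using card_Diff_subset[OF finD DW(1)] card_mono[OF finW DW(1)] by linarith
    moreover have "card D > 0" using finD DW(2) card_gt_0_iff by blast
    ultimately have "card (W - D) < card W" "card W \<le> card (W - D) + 2" by linarith+
    then obtain J where J: "J \<subseteq> W - D" "independent_set adj J" "card (W - D) \<le> 2 * card J"
      using less.hyps less.prems by blast
    have "x \<notin> J" "finite J" using J DW finW finite_subset by blast+
    have "independent_set adj (insert x J)"
      using J x simple_graph_sym[OF sg] simple_graph_irrefl[OF sg]
      unfolding independent_set_def D_def by blast
    moreover have "card (insert x J) = Suc (card J)" using \<open>x \<notin> J\<close> \<open>finite J\<close> by simp
    ultimately show ?thesis using J x \<open>card W \<le> card (W - D) + 2\<close>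
      by (intro exI[of _ "insert x J"]) auto
  qed
qed

lemma maximal_independent_minimal_dominating:
  assumes sg: "simple_graph V adj" and K: "K \<subseteq> V" "independent_set adj K"
    and maximal: "\<And>v. v \<in> V - K \<Longrightarrow> \<not> independent_set adj (insert v K)"
  shows "minimal_dominating V adj K"
  unfolding minimal_dominating_def
proof (intro conjI allI impI)
  show "dominating V adj K"
    unfolding dominating_def
  proof (intro conjI ballI)
    fix v assume v: "v \<in> V"
    show "v \<in> K \<or> (\<exists>u\<in>K. adj v u)"
      using maximal[of v] v K(2) simple_graph_sym[OF sg] simple_graph_irrefl[OF sg]
      unfolding independent_set_def by blast
  qed (rule K(1))
next
  fix S assume "S \<subset> K"
  then obtain x where "x \<in> K" "x \<notin> S" by blast
  moreover have "\<forall>u\<in>S. \<not> adj x u" using \<open>x \<in> K\<close> \<open>S \<subset> K\<close> K(2) unfolding independent_set_def by blast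
  ultimately show "\<not> dominating V adj S" using K(1) unfolding dominating_def by blast
qed

lemma minimal_dominating_card_le_upper_domination:
  assumes "simple_graph V adj" "minimal_dominating V adj S"
  shows "card S \<le> upper_domination V adj"
proof -
  have "{card S | S. minimal_dominating V adj S} \<subseteq> card ` Pow V"
    unfolding minimal_dominating_def dominating_def by auto
  then have "finite {card S | S. minimal_dominating V adj S}"
    by (rule finite_surj[OF finite_Pow_iff[THEN iffD2, OF simple_graph_finite[OF assms(1)]]])
  moreover have "card S \<in> {card S | S. minimal_dominating V adj S}" using assms(2) by blast
  ultimately show ?thesis unfolding upper_domination_def by (rule Max_ge)
qed

lemma independent_card_le_upper_domination:
  assumes sg: "simple_graph V adj" and J: "J \<subseteq> V" "independent_set adj J"
  shows "card J \<le> upper_domination V adj"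
proof -
  have finV: "finite V" using simple_graph_finite[OF sg] .
  define P where "P K \<longleftrightarrow> J \<subseteq> K \<and> K \<subseteq> V \<and> independent_set adj K" for K
  have "P J" using J by (simp add: P_def)
  moreover have "\<forall>K. P K \<longrightarrow> card K < card V + 1"
    using finV by (auto simp: P_def intro: card_mono le_imp_less_Suc)
  ultimately obtain K where K: "P K" and largest: "\<forall>K'. P K' \<longrightarrow> card K' \<le> card K"
    using ex_has_greatest_nat[of P J card "card V + 1"] by blast
  have finK: "finite K" using K finV by (auto simp: P_def intro: finite_subset)
  have "minimal_dominating V adj K"
  proof (rule maximal_independent_minimal_dominating[OF sg])
    fix v assume v: "v \<in> V - K"
    show "\<not> independent_set adj (insert v K)"
    proof
      assume "independent_set adj (insert v K)"
      then have "P (insert v K)" using K v by (auto simp: P_def)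
      then show False using largest v finK by fastforce
    qed
  qed (use K in \<open>auto simp: P_def\<close>)
  then have "card K \<le> upper_domination V adj"
    by (rule minimal_dominating_card_le_upper_domination[OF sg])
  moreover have "card J \<le> card K" using K finK by (auto simp: P_def intro: card_mono)
  ultimately show ?thesis by simp
qed

definition redundant :: "'a set \<Rightarrow> ('a \<Rightarrow> 'a \<Rightarrow> bool) \<Rightarrow> 'a set \<Rightarrow> 'a set" where
  "redundant V adj S = {x\<in>S. dominating V adj (S - {x})}"

definition isolated_vertices :: "('a \<Rightarrow> 'a \<Rightarrow> bool) \<Rightarrow> 'a set \<Rightarrow> 'a set" where
  "isolated_vertices adj S = {v\<in>S. \<forall>u\<in>S. \<not> adj v u}"

lemma isolated_vertices_not_redundant:
  "S \<subseteq> V \<Longrightarrow> isolated_vertices adj S \<inter> redundant V adj S = {}"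
  unfolding isolated_vertices_def redundant_def dominating_def by blast

lemma private_neighbour:
  assumes sg: "simple_graph V adj" and dom: "dominating V adj S"
    and v: "v \<in> S" "v \<notin> redundant V adj S" "\<exists>u\<in>S. adj v u"
  shows "\<exists>w\<in>V - S. adj w v \<and> (\<forall>u\<in>S. adj w u \<longrightarrow> u = v)"
proof -
  obtain w where w: "w \<in> V" "w \<notin> S - {v}" "\<forall>u\<in>S - {v}. \<not> adj w u"
    using v(1,2) dom unfolding redundant_def dominating_def by auto
  have "w \<noteq> v" using w(3) v(3) simple_graph_irrefl[OF sg] by blast
  then have "w \<notin> S" using w(2) by blast
  then obtain u where "u \<in> S" "adj w u" using dom w(1) unfolding dominating_def by blast
  then show ?thesis using w \<open>w \<notin> S\<close> by blast
qed

definition closed_neighbourhood :: "('a \<Rightarrow> 'a \<Rightarrow> bool) \<Rightarrow> 'a set \<Rightarrow> 'a set" where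
  "closed_neighbourhood adj I = I \<union> {x. \<exists>u\<in>I. adj x u}"

lemma independent_isolated_vertices: "independent_set adj (isolated_vertices adj S)"
  by (auto simp: independent_set_def isolated_vertices_def)

lemma card_irredundant_private_bound:
  assumes sg: "simple_graph V adj" and dom: "dominating V adj S"
  defines "R \<equiv> redundant V adj S" and "I \<equiv> isolated_vertices adj S"
  shows "2 * card (S - R - I) + card R \<le> card (V - closed_neighbourhood adj I)"
proof -
  define E where "E = S - R - I"
  define W where "W = V - closed_neighbourhood adj I"
  have finV: "finite V" using simple_graph_finite[OF sg] .
  have SV: "S \<subseteq> V" using dom by (simp add: dominating_def)
  have "\<forall>v\<in>E. \<exists>w\<in>V - S. adj w v \<and> (\<forall>u\<in>S. adj w u \<longrightarrow> u = v)"
    using private_neighbour[OF sg dom] unfolding E_def I_def R_def isolated_vertices_def by blast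
  then obtain p where p: "\<forall>v\<in>E. p v \<in> V - S \<and> adj (p v) v \<and> (\<forall>u\<in>S. adj (p v) u \<longrightarrow> u = v)"
    by (metis bchoice)
  have inj_p: "inj_on p E"
  proof (rule inj_onI)
    fix v w assume v: "v \<in> E" and w: "w \<in> E" and eq: "p v = p w"
    have "w \<in> S" using w by (simp add: E_def)
    moreover have "adj (p v) w" using bspec[OF p w] eq by simp
    ultimately show "v = w" using bspec[OF p v] by blast
  qed
  have sub: "E \<union> R \<union> p ` E \<subseteq> W"
  proof -
    have "I \<inter> R = {}"
      using isolated_vertices_not_redundant[OF SV] unfolding I_def R_def .
    then have "E \<union> R \<subseteq> S - I"
      unfolding E_def R_def redundant_def by blast
    moreover have "S - I \<subseteq> W"
      using SV simple_graph_sym[OF sg] unfolding W_def I_def closed_neighbourhood_def isolated_vertices_def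
      by blast
    moreover have "p ` E \<subseteq> W"
      using p unfolding W_def E_def I_def closed_neighbourhood_def isolated_vertices_def by blast
    ultimately show ?thesis by blast
  qed
  have "card (E \<union> R \<union> p ` E) = card E + card R + card E"
  proof -
    have "finite S" using SV finV finite_subset by blast
    then have "finite E" "finite R" unfolding E_def R_def redundant_def by auto
    moreover have "E \<inter> R = {}" "(E \<union> R) \<inter> p ` E = {}"
      using p unfolding E_def R_def redundant_def by blast+
    ultimately show ?thesis
      using inj_p by (simp add: card_Un_disjoint card_image)
  qed
  moreover have "finite W" using finV by (simp add: W_def)
  ultimately show ?thesis
    using card_mono[OF _ sub] unfolding E_def W_def by linarith
qed

lemma independent_closed_neighbourhood_bound:
  assumes forest: "forest V adj" and I: "I \<subseteq> V" "independent_set adj I"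
  shows "2 * card I + card (V - closed_neighbourhood adj I) \<le> 2 * upper_domination V adj"
proof -
  define W where "W = V - closed_neighbourhood adj I"
  have sg: "simple_graph V adj" using forest by (simp add: forest_def)
  have finV: "finite V" using simple_graph_finite[OF sg] .
  obtain J where J: "J \<subseteq> W" "independent_set adj J" "card W \<le> 2 * card J"
    using forest_independent_half[OF forest, of W] by (auto simp: W_def)
  have "\<not> adj x u" if "x \<in> J" "u \<in> I" for x u
    using J(1) that unfolding W_def closed_neighbourhood_def by blast
  then have "independent_set adj (I \<union> J)"
    using I(2) J(2) simple_graph_sym[OF sg] unfolding independent_set_def by blast
  moreover have "I \<union> J \<subseteq> V" using I(1) J(1) unfolding W_def by blast
  ultimately have "card (I \<union> J) \<le> upper_domination V adj"
    by (intro independent_card_le_upper_domination[OF sg])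
  moreover have "card (I \<union> J) = card I + card J"
    using I(1) J(1) finV unfolding W_def closed_neighbourhood_def
    by (intro card_Un_disjoint) (auto intro: finite_subset)
  ultimately show ?thesis using J(3) unfolding W_def by linarith
qed

lemma upper_domination_bound:
  assumes forest: "forest V adj" and dom: "dominating V adj S"
  shows "2 * card (S - redundant V adj S) + card (redundant V adj S) \<le> 2 * upper_domination V adj"
proof -
  define R where "R = redundant V adj S"
  define I where "I = isolated_vertices adj S"
  have sg: "simple_graph V adj" using forest by (simp add: forest_def)
  have SV: "S \<subseteq> V" using dom by (simp add: dominating_def)
  have "I \<subseteq> S - R"
    using isolated_vertices_not_redundant[OF SV] unfolding I_def R_def isolated_vertices_def by blast
  moreover have "finite (S - R)" using SV simple_graph_finite[OF sg] finite_subset by blast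
  ultimately have "card (S - R) = card I + card (S - R - I)"
    using card_Diff_subset card_mono finite_subset by (metis le_add_diff_inverse)
  moreover have "2 * card (S - R - I) + card R \<le> card (V - closed_neighbourhood adj I)"
    using card_irredundant_private_bound[OF sg dom] unfolding R_def I_def .
  moreover have "I \<subseteq> V" using SV unfolding I_def isolated_vertices_def by blast
  then have "2 * card I + card (V - closed_neighbourhood adj I) \<le> 2 * upper_domination V adj"
    using independent_closed_neighbourhood_bound[OF forest] independent_isolated_vertices
    unfolding I_def by blast
  ultimately show ?thesis unfolding R_def by linarith
qed

lemma card_redundant_lower_bound:
  assumes forest: "forest V adj" and dom: "dominating V adj S"
  shows "2 * card S \<le> 2 * upper_domination V adj + card (redundant V adj S)"
proof -
  have "finite S"
    using dom forest simple_graph_finite finite_subset by (auto simp: forest_def dominating_def)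
  moreover have "redundant V adj S \<subseteq> S" by (auto simp: redundant_def)
  ultimately have "card S = card (S - redundant V adj S) + card (redundant V adj S)"
    using card_Diff_subset card_mono finite_subset by (metis le_add_diff_inverse2)
  then show ?thesis using upper_domination_bound[OF forest dom] by linarith
qed

lemma dom_count_Suc_le:
  assumes finV: "finite V" and i: "i < card V"
    and many_redundant: "\<And>S. dominating V adj S \<Longrightarrow> card S = Suc i \<Longrightarrow>
                            card V - i \<le> card (redundant V adj S)"
  shows "dom_count V adj (Suc i) \<le> dom_count V adj i"
proof -
  define A where "A = {S. dominating V adj S \<and> card S = Suc i}"
  define B where "B = {T. dominating V adj T \<and> card T = i}"
  have finA: "finite A" and finB: "finite B"
    using finV by (auto simp: A_def B_def dominating_def intro: finite_subset[of _ "Pow V"])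
  have fin_sets: "finite S" if "dominating V adj S" for S
    using that finV finite_subset by (auto simp: dominating_def)
  have "card A * (card V - i) \<le> (\<Sum>S\<in>A. card (redundant V adj S))"
    using sum_bounded_below[of A "card V - i" "\<lambda>S. card (redundant V adj S)"] many_redundant
    by (simp add: A_def)
  also have "\<dots> = card (Sigma A (redundant V adj))"
    using finA fin_sets by (intro card_SigmaI[symmetric]) (auto simp: A_def redundant_def)
  also have "\<dots> \<le> card (Sigma B (\<lambda>T. V - T))"
  proof (rule card_inj_on_le[of "\<lambda>(S, x). (S - {x}, x)"])
    show "inj_on (\<lambda>(S, x). (S - {x}, x)) (Sigma A (redundant V adj))"
    proof (rule inj_onI, clarsimp)
      fix S S' x
      assume "x \<in> redundant V adj S" "x \<in> redundant V adj S'" "S - {x} = S' - {x}"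
      then show "S = S'" unfolding redundant_def by (metis (no_types, lifting) insert_Diff mem_Collect_eq)
    qed
    show "(\<lambda>(S, x). (S - {x}, x)) ` Sigma A (redundant V adj) \<subseteq> Sigma B (\<lambda>T. V - T)"
    proof clarsimp
      fix S x assume "S \<in> A" "x \<in> redundant V adj S"
      then have "dominating V adj S" "card S = Suc i" "x \<in> S" "dominating V adj (S - {x})"
        by (auto simp: A_def redundant_def)
      then show "S - {x} \<in> B \<and> x \<in> V"
        using fin_sets by (auto simp: B_def dominating_def)
    qed
    show "finite (Sigma B (\<lambda>T. V - T))" using finB finV by auto
  qed
  also have "\<dots> = (\<Sum>T\<in>B. card (V - T))"
    using finB finV by (intro card_SigmaI) auto
  also have "\<dots> = (\<Sum>T\<in>B. card V - i)"
    using fin_sets by (intro sum.cong) (auto simp: B_def dominating_def card_Diff_subset)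
  also have "\<dots> = card B * (card V - i)" by simp
  finally have "card A * (card V - i) \<le> card B * (card V - i)" .
  then show ?thesis using i by (simp add: dom_count_def A_def B_def)
qed

theorem theorem4p11:
  fixes V :: "'a set" and adj :: "'a \<Rightarrow> 'a \<Rightarrow> bool" and n :: nat
  assumes "is_tree V adj" and "card V = n"
  shows "\<forall>i. nat \<lceil>(real n + 2 * real (upper_domination V adj) - 2) / 3\<rceil> \<le> i \<and> i < n
           \<longrightarrow> dom_count V adj (Suc i) \<le> dom_count V adj i"
proof (intro allI impI)
  fix i
  assume i: "nat \<lceil>(real n + 2 * real (upper_domination V adj) - 2) / 3\<rceil> \<le> i \<and> i < n"
  have forest: "forest V adj" using assms(1) by (rule is_tree_imp_forest)
  have "(real n + 2 * real (upper_domination V adj) - 2) / 3 \<le> real i"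
    using i le_of_int_ceiling[of "(real n + 2 * real (upper_domination V adj) - 2) / 3"] by linarith
  then have "real (n + 2 * upper_domination V adj) \<le> real (3 * i + 2)" by simp
  then have large_i: "n + 2 * upper_domination V adj \<le> 3 * i + 2" by (simp only: of_nat_le_iff)
  show "dom_count V adj (Suc i) \<le> dom_count V adj i"
  proof (rule dom_count_Suc_le)
    show "finite V" using forest simple_graph_finite by (auto simp: forest_def)
    show "i < card V" using i assms(2) by simp
    fix S assume "dominating V adj S" "card S = Suc i"
    then show "card V - i \<le> card (redundant V adj S)"
      using card_redundant_lower_bound[OF forest] large_i assms(2) by fastforce
  qed
qed

end
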